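(* Let $s,a\geq 1$ be integers. Let $G$ be a graph which contains no copy of $K_{s,s}$ as a subgraph and let $X\subseteq V(G)$ satisfy $|X|\geq (2a)^{4a+10}(4s)^{4a+2}$. Then there exist an integer $t\in[a,2a]$ and a nonempty collection $\mathcal{I}$ of independent sets of size $t$ contained in $X$ such that $\mathcal{I}$, viewed as a $t$-uniform hypergraph (with edge set $\mathcal{I}$), is $(\varepsilon,\delta)$-superspread, where $\varepsilon=(2a)^{-2}$ and $\delta=(2a)^{-2(a+1)}s^{-1}$.
   Context: For a hypergraph $\mathcal{H}$ and $S\subseteq V(\mathcal{H})$, $\deg_{\mathcal{H}}(S)=|\{e\in E(\mathcal{H}): S\subseteq e\}|$. An edge $e$ is $\delta$-heavy if there exist $S\subseteq e$ and $v\in e\setminus S$ with $\deg_{\mathcal{H}}(S\cup\{v\})\geq\delta\deg_{\mathcal{H}}(S)$. $\mathcal{H}$ is $(\varepsilon,\delta)$-superspread if at most $\varepsilon\,e(\mathcal{H})$ of its edges are $\delta$-heavy. *)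

theory Defs
  imports Main "HOL-Analysis.Analysis"
begin

definition simple_graph :: "'a set \<Rightarrow> ('a \<Rightarrow> 'a \<Rightarrow> bool) \<Rightarrow> bool" where
  "simple_graph V E \<longleftrightarrow> finite V \<and> (\<forall>x y. E x y \<longrightarrow> x \<in> V \<and> y \<in> V)
     \<and> (\<forall>x y. E x y \<longrightarrow> E y x) \<and> (\<forall>x. \<not> E x x)"

definition contains_Kss :: "'a set \<Rightarrow> ('a \<Rightarrow> 'a \<Rightarrow> bool) \<Rightarrow> nat \<Rightarrow> bool" where
  "contains_Kss V E s \<longleftrightarrow> (\<exists>A B. A \<subseteq> V \<and> B \<subseteq> V \<and> A \<inter> B = {} \<and>
      card A = s \<and> card B = s \<and> finite A \<and> finite B \<and> (\<forall>x\<in>A. \<forall>y\<in>B. E x y))"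

definition independent_set :: "('a \<Rightarrow> 'a \<Rightarrow> bool) \<Rightarrow> 'a set \<Rightarrow> bool" where
  "independent_set E I \<longleftrightarrow> (\<forall>x\<in>I. \<forall>y\<in>I. \<not> E x y)"

definition hdeg :: "'a set set \<Rightarrow> 'a set \<Rightarrow> nat" where
  "hdeg H S = card {e \<in> H. S \<subseteq> e}"

definition heavy_edge :: "'a set set \<Rightarrow> real \<Rightarrow> 'a set \<Rightarrow> bool" where
  "heavy_edge H \<delta> e \<longleftrightarrow> (\<exists>S v. S \<subseteq> e \<and> v \<in> e - S \<and>
      real (hdeg H (S \<union> {v})) \<ge> \<delta> * real (hdeg H S))"

definition superspread :: "'a set set \<Rightarrow> real \<Rightarrow> real \<Rightarrow> bool" where
  "superspread H \<epsilon> \<delta> \<longleftrightarrow> real (card {e \<in> H. heavy_edge H \<delta> e}) \<le> \<epsilon> * real (card H)"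

end

theory Submission
  imports Defs
begin

text \<open>
  If no family of independent t-sets in X with a \<le> t \<le> 2a were superspread, every such
  family H would have a shadow of size at least \<epsilon>\<delta>|H| / (2^(2a) 2a): a heavy edge e with
  witness (S, v) is determined by its shadow set e - {v}, a subset S of it, and v, and by
  double counting S has at most t/\<delta> such heavy extensions v. Starting from the
  independent 2a-sets of X, of which there are at least (|X| / (4a (4s)^(2a)))^(2a)
  because in a K_{s,s}-free graph fewer than s vertices of any large set Y see almost all
  of Y, a + 1 shadow steps then produce more than |X|^(a-1) sets of size a - 1 in X.
\<close>

section \<open>Heavy edges and shadows\<close>

definition shadow :: "'a set set \<Rightarrow> 'a set set" where
  "shadow H = {e - {v} | e v. e \<in> H \<and> v \<in> e}"

lemma finite_shadow: "finite H \<Longrightarrow> \<forall>e\<in>H. finite e \<Longrightarrow> finite (shadow H)"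
proof -
  assume "finite H" "\<forall>e\<in>H. finite e"
  then have "finite (\<Union>e\<in>H. (\<lambda>v. e - {v}) ` e)" by auto
  moreover have "shadow H = (\<Union>e\<in>H. (\<lambda>v. e - {v}) ` e)" unfolding shadow_def by auto
  ultimately show ?thesis by simp
qed

lemma sum_hdeg_insert_le:
  assumes "finite H" and "\<forall>e\<in>H. finite e \<and> card e \<le> t" and "finite B"
  shows "(\<Sum>w\<in>B. hdeg H (insert w S)) \<le> t * hdeg H S"
proof -
  define H\<^sub>S where "H\<^sub>S = {e\<in>H. S \<subseteq> e}"
  have "finite H\<^sub>S" unfolding H\<^sub>S_def using assms(1) by simp
  have "hdeg H (insert w S) = card {e\<in>H\<^sub>S. w \<in> e}" for w
    unfolding hdeg_def H\<^sub>S_def by (rule arg_cong[where f = card]) auto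
  then have "(\<Sum>w\<in>B. hdeg H (insert w S)) = (\<Sum>w\<in>B. \<Sum>e\<in>{e\<in>H\<^sub>S. w \<in> e}. 1)" by simp
  also have "\<dots> = (\<Sum>e\<in>H\<^sub>S. \<Sum>w\<in>{w\<in>B. w \<in> e}. 1)"
    using assms(3) \<open>finite H\<^sub>S\<close> by (rule sum.swap_restrict)
  also have "\<dots> \<le> (\<Sum>e\<in>H\<^sub>S. t)"
  proof (intro sum_mono)
    fix e assume "e \<in> H\<^sub>S"
    then have "finite e" "card e \<le> t" using assms(2) unfolding H\<^sub>S_def by auto
    moreover have "card {w\<in>B. w \<in> e} \<le> card e" using \<open>finite e\<close> by (rule card_mono) auto
    ultimately show "(\<Sum>w\<in>{w\<in>B. w \<in> e}. 1) \<le> t" by simp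
  qed
  finally show ?thesis by (simp add: hdeg_def H\<^sub>S_def mult.commute)
qed

lemma hdeg_pos: "finite H \<Longrightarrow> e \<in> H \<Longrightarrow> S \<subseteq> e \<Longrightarrow> hdeg H S > 0"
  unfolding hdeg_def by (subst card_gt_0_iff) auto

definition heavy_extensions :: "'a set set \<Rightarrow> real \<Rightarrow> 'a set \<Rightarrow> 'a set" where
  "heavy_extensions H \<delta> S = {w \<in> \<Union>H. \<delta> * hdeg H S \<le> hdeg H (insert w S)}"

lemma card_heavy_extensions_le:
  assumes "finite H" and "\<forall>e\<in>H. finite e \<and> card e \<le> t" and "\<delta> > 0" and "hdeg H S > 0"
  shows "\<delta> * card (heavy_extensions H \<delta> S) \<le> t"
proof -
  define B where "B = heavy_extensions H \<delta> S"
  have "finite B" unfolding B_def heavy_extensions_def using assms(1,2) by auto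
  have "(\<delta> * card B) * hdeg H S = (\<Sum>w\<in>B. \<delta> * hdeg H S)" by simp
  also have "\<dots> \<le> (\<Sum>w\<in>B. real (hdeg H (insert w S)))"
    by (rule sum_mono) (simp add: B_def heavy_extensions_def)
  also have "\<dots> \<le> t * hdeg H S"
    using sum_hdeg_insert_le[OF assms(1,2) \<open>finite B\<close>, of S] by (simp flip: of_nat_sum of_nat_mult)
  finally show ?thesis using assms(4) unfolding B_def by simp
qed

lemma heavy_edges_subset:
  "{e \<in> H. heavy_edge H \<delta> e}
    \<subseteq> (\<Union>f\<in>shadow H. \<Union>S\<in>Pow f. (\<lambda>w. insert w f) ` heavy_extensions H \<delta> S)"
proof
  fix e assume "e \<in> {e \<in> H. heavy_edge H \<delta> e}"
  then obtain S v where "e \<in> H" "S \<subseteq> e" "v \<in> e - S" "\<delta> * hdeg H S \<le> hdeg H (insert v S)"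
    unfolding heavy_edge_def by auto
  then have "e - {v} \<in> shadow H" "S \<in> Pow (e - {v})" "v \<in> heavy_extensions H \<delta> S"
    "e = insert v (e - {v})"
    unfolding shadow_def heavy_extensions_def by auto
  then show "e \<in> (\<Union>f\<in>shadow H. \<Union>S\<in>Pow f. (\<lambda>w. insert w f) ` heavy_extensions H \<delta> S)"
    by blast
qed

lemma card_heavy_edges_le:
  fixes \<delta> :: real
  assumes "finite H" and "\<forall>e\<in>H. finite e \<and> card e \<le> t" and "\<delta> > 0"
  shows "\<delta> * card {e \<in> H. heavy_edge H \<delta> e} \<le> card (shadow H) * 2 ^ t * t"
proof -
  define B where "B = heavy_extensions H \<delta>"
  have fin_B: "finite (B S)" for S unfolding B_def heavy_extensions_def using assms(1,2) by auto
  have fin_shadow: "finite (shadow H)" using finite_shadow assms(1,2) by blast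
  have shadow_edge: "\<exists>e\<in>H. f \<subseteq> e" if "f \<in> shadow H" for f
    using that unfolding shadow_def by auto
  have fin_f: "finite f" and card_f: "card f \<le> t" if "f \<in> shadow H" for f
    using shadow_edge[OF that] assms(2) finite_subset card_mono order_trans by metis+
  have "card {e \<in> H. heavy_edge H \<delta> e} \<le> card (\<Union>f\<in>shadow H. \<Union>S\<in>Pow f. (\<lambda>w. insert w f) ` B S)"
    unfolding B_def using fin_shadow fin_f fin_B[unfolded B_def]
    by (intro card_mono heavy_edges_subset) auto
  also have "\<dots> \<le> (\<Sum>f\<in>shadow H. \<Sum>S\<in>Pow f. card (B S))"
    using fin_shadow fin_f
    by (intro card_UN_le[THEN order_trans] sum_mono card_image_le fin_B) auto
  finally have "\<delta> * card {e \<in> H. heavy_edge H \<delta> e} \<le> \<delta> * (\<Sum>f\<in>shadow H. \<Sum>S\<in>Pow f. card (B S))"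
    using assms(3) by (simp del: of_nat_sum flip: of_nat_sum)
  also have "\<dots> = (\<Sum>f\<in>shadow H. \<Sum>S\<in>Pow f. \<delta> * card (B S))"
    by (simp add: sum_distrib_left)
  also have "\<dots> \<le> (\<Sum>f\<in>shadow H. \<Sum>S\<in>Pow f. real t)"
  proof (intro sum_mono)
    fix f S assume "f \<in> shadow H" "S \<in> Pow f"
    then obtain e where "e \<in> H" "S \<subseteq> e" using shadow_edge by blast
    then show "\<delta> * card (B S) \<le> real t"
      unfolding B_def by (intro card_heavy_extensions_le assms hdeg_pos[OF assms(1)])
  qed
  also have "\<dots> \<le> (\<Sum>f\<in>shadow H. 2 ^ t * real t)"
    using fin_f card_f by (intro sum_mono) (simp add: card_Pow mult_right_mono power_increasing)
  finally show ?thesis by simp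
qed

lemma card_shadow_if_not_superspread:
  fixes \<epsilon> \<delta> :: real
  assumes "finite H" and "\<forall>e\<in>H. finite e \<and> card e \<le> t" and "\<delta> > 0"
    and "\<not> superspread H \<epsilon> \<delta>"
  shows "\<epsilon> * \<delta> * card H < card (shadow H) * 2 ^ t * t"
proof -
  have "\<epsilon> * card H < card {e \<in> H. heavy_edge H \<delta> e}"
    using assms(4) unfolding superspread_def by simp
  then have "\<epsilon> * \<delta> * card H < \<delta> * card {e \<in> H. heavy_edge H \<delta> e}"
    using assms(3) by (simp add: algebra_simps)
  also have "\<dots> \<le> card (shadow H) * 2 ^ t * t"
    using card_heavy_edges_le[OF assms(1-3)] .
  finally show ?thesis .
qed

lemma large_iterated_shadow:
  fixes \<epsilon> \<delta> :: real and F :: "'a set set"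
  assumes "finite X" and "\<forall>T\<in>F. T \<subseteq> X" and F_down: "\<And>T v. T \<in> F \<Longrightarrow> T - {v} \<in> F"
    and "\<epsilon> \<ge> 0" and "\<delta> > 0"
    and not_superspread: "\<And>t H. l < t \<Longrightarrow> t \<le> m \<Longrightarrow> H \<noteq> {} \<Longrightarrow> H \<subseteq> {T\<in>F. card T = t}
        \<Longrightarrow> \<not> superspread H \<epsilon> \<delta>"
    and "H \<subseteq> {T\<in>F. card T = m}" and "j \<le> m - l"
  shows "\<exists>H'. H' \<subseteq> {T\<in>F. card T = m - j} \<and> (\<epsilon> * \<delta> / (2 ^ m * real m)) ^ j * card H \<le> card H'"
  using \<open>j \<le> m - l\<close>
proof (induction j)
  case 0
  then show ?case using assms(7) by auto
next
  case (Suc j)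
  define c where "c = \<epsilon> * \<delta> / (2 ^ m * real m)"
  define t where "t = m - j"
  obtain H' where H': "H' \<subseteq> {T\<in>F. card T = t}" and card_H': "c ^ j * card H \<le> card H'"
    using Suc unfolding c_def t_def by auto
  have t: "l < t" "t \<le> m" using Suc.prems unfolding t_def by auto
  have fin_H': "finite H'" "\<forall>e\<in>H'. finite e \<and> card e \<le> t"
    using H' assms(1,2) by (auto intro: finite_subset[of _ "Pow X"] finite_subset)
  have shadow_H': "shadow H' \<subseteq> {T\<in>F. card T = m - Suc j}"
    using H' F_down fin_H' unfolding shadow_def t_def by auto
  have "c * card H' \<le> card (shadow H')"
  proof (cases "H' = {}")
    case False
    have "\<epsilon> * \<delta> * card H' \<le> card (shadow H') * 2 ^ t * t"
      using card_shadow_if_not_superspread[OF fin_H' \<open>\<delta> > 0\<close> not_superspread[OF t False H']] by simp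
    also have "\<dots> \<le> card (shadow H') * 2 ^ m * m"
      using t by (simp add: mult.assoc mult_left_mono mult_mono)
    finally show ?thesis
      using t unfolding c_def by (simp add: divide_le_eq mult.commute mult.left_commute)
  qed simp
  moreover have "c ^ Suc j * card H \<le> c * card H'"
    using mult_left_mono[OF card_H', of c] assms(4,5) unfolding c_def by (simp add: mult.assoc)
  ultimately have "c ^ Suc j * card H \<le> card (shadow H')" by linarith
  with shadow_H' show ?case unfolding c_def by blast
qed

section \<open>Independent sets in K_{s,s}-free graphs\<close>

definition indep_sets :: "('a \<Rightarrow> 'a \<Rightarrow> bool) \<Rightarrow> 'a set \<Rightarrow> nat \<Rightarrow> 'a set set" where
  "indep_sets E Y k = {I. I \<subseteq> Y \<and> card I = k \<and> independent_set E I}"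

text \<open>Since E is irreflexive, x itself belongs to its non-neighbourhood.\<close>

definition non_neighbours :: "('a \<Rightarrow> 'a \<Rightarrow> bool) \<Rightarrow> 'a set \<Rightarrow> 'a \<Rightarrow> 'a set" where
  "non_neighbours E Y x = {y \<in> Y. \<not> E x y}"

lemma finite_indep_sets: "finite Y \<Longrightarrow> finite (indep_sets E Y k)"
  unfolding indep_sets_def by (rule finite_subset[of _ "Pow Y"]) auto

lemma card_dense_vertices_less:
  assumes G: "simple_graph V E" and "\<not> contains_Kss V E s" and "Y \<subseteq> V" and "2 * s \<le> card Y"
  shows "card {x \<in> Y. card (non_neighbours E Y x) < card Y / (2 * s)} < s"
proof (rule ccontr)
  define D where "D = {x \<in> Y. card (non_neighbours E Y x) < card Y / (2 * s)}"
  assume "\<not> ?thesis"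
  then have "s \<le> card D" unfolding D_def by simp
  then obtain A where "A \<subseteq> D" "card A = s" "finite A"
    by (rule obtain_subset_with_card_n)
  then have A: "A \<subseteq> Y" "card A = s" "finite A"
    "\<forall>x\<in>A. card (non_neighbours E Y x) < card Y / (2 * s)"
    unfolding D_def by auto
  have "finite Y" using G \<open>Y \<subseteq> V\<close> finite_subset unfolding simple_graph_def by blast
  define C where "C = {y \<in> Y. \<forall>x\<in>A. E x y}"
  have "Y - C = (\<Union>x\<in>A. non_neighbours E Y x)" unfolding C_def non_neighbours_def by auto
  then have "card (Y - C) \<le> (\<Sum>x\<in>A. card (non_neighbours E Y x))"
    using card_UN_le[OF \<open>finite A\<close>] by simp
  then have "real (card (Y - C)) \<le> (\<Sum>x\<in>A. real (card (non_neighbours E Y x)))"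
    by (metis of_nat_le_iff of_nat_sum)
  also have "\<dots> \<le> (\<Sum>x\<in>A. card Y / (2 * s))"
    using A(4) by (intro sum_mono) (simp add: less_imp_le)
  also have "\<dots> \<le> card Y / 2" using A(2) by simp
  finally have "card Y / 2 \<le> card C"
    using card_Diff_subset[of C Y] card_mono[OF \<open>finite Y\<close>, of C] \<open>finite Y\<close>
    unfolding C_def by (simp add: finite_subset)
  then have "s \<le> card C" using \<open>2 * s \<le> card Y\<close> by linarith
  then obtain B where B: "B \<subseteq> C" "card B = s" "finite B"
    by (rule obtain_subset_with_card_n)
  have "A \<inter> B = {}"
    using B G unfolding C_def simple_graph_def by blast
  moreover have "B \<subseteq> V" using B \<open>Y \<subseteq> V\<close> unfolding C_def by auto
  moreover have "\<forall>x\<in>A. \<forall>y\<in>B. E x y" using B(1) unfolding C_def by blast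
  moreover have "A \<subseteq> V" using A(1) \<open>Y \<subseteq> V\<close> by blast
  ultimately have "contains_Kss V E s"
    unfolding contains_Kss_def using A(2,3) B(2,3) by blast
  then show False using assms(2) by simp
qed

lemma sum_card_indep_sets_non_neighbours_le:
  assumes G: "simple_graph V E" and "finite Y" and "X \<subseteq> Y"
  shows "(\<Sum>x\<in>X. card (indep_sets E (non_neighbours E Y x - {x}) k))
    \<le> Suc k * card (indep_sets E Y (Suc k))"
proof -
  define P where "P = (SIGMA x:X. indep_sets E (non_neighbours E Y x - {x}) k)"
  define f :: "'a \<times> 'a set \<Rightarrow> 'a set \<times> 'a" where "f = (\<lambda>(x, T). (insert x T, x))"
  have "finite X" using assms(2,3) finite_subset by blast
  have fin_I: "finite (indep_sets E Y (Suc k))" using finite_indep_sets[OF \<open>finite Y\<close>] .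
  have "(\<Sum>x\<in>X. card (indep_sets E (non_neighbours E Y x - {x}) k)) = card P"
    unfolding P_def using \<open>finite X\<close> \<open>finite Y\<close>
    by (intro card_SigmaI[symmetric] ballI finite_indep_sets) (auto simp: non_neighbours_def)
  also have "\<dots> \<le> card (SIGMA U:indep_sets E Y (Suc k). U)"
  proof (rule card_inj_on_le)
    have "x \<notin> T" if "(x, T) \<in> P" for x T
      using that unfolding P_def indep_sets_def by auto
    then show "inj_on f P"
      unfolding inj_on_def f_def by clarify (metis Diff_insert_absorb)
    show "f ` P \<subseteq> (SIGMA U:indep_sets E Y (Suc k). U)"
    proof (clarsimp simp: f_def P_def)
      fix x T assume "x \<in> X" "T \<in> indep_sets E (non_neighbours E Y x - {x}) k"
      then have "T \<subseteq> Y" "x \<in> Y" "x \<notin> T" "card T = k" "finite T"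
        "\<forall>y\<in>T. \<not> E x y" "independent_set E T"
        using assms(3) unfolding indep_sets_def non_neighbours_def
        by (auto intro: finite_subset[OF _ \<open>finite Y\<close>])
      moreover have "\<not> E y x" if "\<not> E x y" for y
        using G that unfolding simple_graph_def by blast
      moreover have "\<not> E x x" using G unfolding simple_graph_def by blast
      ultimately show "insert x T \<in> indep_sets E Y (Suc k)"
        unfolding indep_sets_def independent_set_def by auto
    qed
    show "finite (SIGMA U:indep_sets E Y (Suc k). U)"
      using fin_I by (rule finite_SigmaI) (auto simp: indep_sets_def intro: finite_subset[OF _ \<open>finite Y\<close>])
  qed
  also have "\<dots> = (\<Sum>U\<in>indep_sets E Y (Suc k). card U)"
    using fin_I by (rule card_SigmaI) (auto simp: indep_sets_def intro: finite_subset[OF _ \<open>finite Y\<close>])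
  also have "\<dots> = Suc k * card (indep_sets E Y (Suc k))"
    by (simp add: indep_sets_def)
  finally show ?thesis .
qed

lemma indep_bound_step:
  fixes r q :: real and k :: nat
  assumes "r \<ge> 0" and "q \<ge> 1"
  shows "(r / (2 * real (Suc k) * q ^ Suc k)) ^ Suc k
      \<le> r / (2 * real (Suc k)) * (r / q / (2 * real k * q ^ k)) ^ k"
proof -
  define b where "b = r / (2 * real (Suc k) * q ^ Suc k)"
  have "b \<ge> 0" unfolding b_def using assms by simp
  have "1 \<le> q ^ Suc k" using assms(2) by (rule one_le_power)
  then have "b \<le> r / (2 * real (Suc k))"
    unfolding b_def using assms(1) by (intro divide_left_mono) auto
  moreover have "b ^ k \<le> (r / q / (2 * real k * q ^ k)) ^ k"
  proof (cases "k = 0")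
    case False
    have "b \<le> r / (2 * real k * q ^ Suc k)"
      unfolding b_def using assms False by (intro divide_left_mono) auto
    also have "\<dots> = r / q / (2 * real k * q ^ k)" by (simp add: field_simps)
    finally show ?thesis using \<open>b \<ge> 0\<close> by (rule power_mono)
  qed simp
  ultimately have "b * b ^ k \<le> r / (2 * real (Suc k)) * (r / q / (2 * real k * q ^ k)) ^ k"
    using \<open>b \<ge> 0\<close> assms(1) by (intro mult_mono) auto
  then show ?thesis by (simp only: b_def power_Suc)
qed

lemma card_sparse_vertices_ge:
  fixes r :: real
  assumes G: "simple_graph V E" and "\<not> contains_Kss V E s" and "Y \<subseteq> V"
    and "4 * real s \<le> r" and "r \<le> card Y"
  shows "r / 2 \<le> card {x \<in> Y. card Y / (2 * real s) \<le> card (non_neighbours E Y x)}"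
proof -
  define Good where "Good = {x \<in> Y. card Y / (2 * real s) \<le> card (non_neighbours E Y x)}"
  have "finite Y" using G \<open>Y \<subseteq> V\<close> finite_subset unfolding simple_graph_def by blast
  have "Y - Good = {x \<in> Y. card (non_neighbours E Y x) < card Y / (2 * s)}"
    unfolding Good_def by auto
  moreover have "2 * s \<le> card Y" using assms(4,5) by linarith
  ultimately have "card (Y - Good) < s"
    using card_dense_vertices_less[OF G assms(2,3)] by simp
  moreover have "card Y = card Good + card (Y - Good)"
    using card_Int_Diff[OF \<open>finite Y\<close>, of Good] unfolding Good_def by (simp add: Int_absorb1)
  ultimately have "r / 2 \<le> card Good" using assms(4,5) by linarith
  then show ?thesis unfolding Good_def by simp
qed

lemma card_non_neighbours_Diff_ge:
  assumes "s \<ge> 1" and "4 * real s \<le> card Y"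
    and "card Y / (2 * real s) \<le> card (non_neighbours E Y x)"
  shows "card Y / (4 * real s) \<le> card (non_neighbours E Y x - {x})"
proof -
  have "card (non_neighbours E Y x) \<le> card (non_neighbours E Y x - {x}) + 1"
    by (simp add: card_Diff_singleton_if, arith)
  moreover have "card Y / (4 * real s) \<le> card Y / (2 * real s) - 1"
    using assms(1,2) by (simp add: field_simps)
  ultimately show ?thesis using assms(3) by linarith
qed

lemma card_indep_sets_ge:
  fixes r :: real
  assumes G: "simple_graph V E" and no_Kss: "\<not> contains_Kss V E s" and "s \<ge> 1"
    and "Y \<subseteq> V" and "(4 * real s) ^ k \<le> r" and "r \<le> card Y"
  shows "(r / (2 * real k * (4 * real s) ^ k)) ^ k \<le> card (indep_sets E Y k)"
  using assms(4-6)
proof (induction k arbitrary: Y r)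
  case 0
  then have "finite Y" using G finite_subset unfolding simple_graph_def by blast
  then have "indep_sets E Y 0 = {{}}"
    unfolding indep_sets_def independent_set_def by (auto dest: finite_subset)
  then show ?case by simp
next
  case (Suc k)
  define q where "q = 4 * real s"
  define L where "L = (r / q / (2 * real k * q ^ k)) ^ k"
  define Good where "Good = {x \<in> Y. card Y / (2 * real s) \<le> card (non_neighbours E Y x)}"
  have "finite Y" using Suc.prems(1) G finite_subset unfolding simple_graph_def by blast
  have "q \<ge> 4" unfolding q_def using \<open>s \<ge> 1\<close> by simp
  have "q ^ Suc k \<le> r" using Suc.prems(2) unfolding q_def .
  moreover have "q ^ 1 \<le> q ^ Suc k" using \<open>q \<ge> 4\<close> by (intro power_increasing) auto
  ultimately have "q \<le> r" by simp
  have "q \<le> card Y" using \<open>q \<le> r\<close> Suc.prems(3) by simp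
  have "r / 2 \<le> card Good"
    unfolding Good_def using \<open>q \<le> r\<close> Suc.prems(3) unfolding q_def
    by (intro card_sparse_vertices_ge[OF G no_Kss Suc.prems(1)])
  have IH: "L \<le> card (indep_sets E (non_neighbours E Y x - {x}) k)" if "x \<in> Good" for x
  proof -
    have "card Y / q \<le> card (non_neighbours E Y x - {x})"
      using that \<open>q \<le> card Y\<close> unfolding Good_def q_def
      by (intro card_non_neighbours_Diff_ge \<open>s \<ge> 1\<close>) auto
    then have "r / q \<le> card (non_neighbours E Y x - {x})"
      using divide_right_mono[OF Suc.prems(3), of q] \<open>q \<ge> 4\<close> by linarith
    moreover have "q ^ k \<le> r / q" using \<open>q ^ Suc k \<le> r\<close> \<open>q \<ge> 4\<close> by (simp add: field_simps)
    moreover have "non_neighbours E Y x - {x} \<subseteq> V"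
      using Suc.prems(1) unfolding non_neighbours_def by auto
    ultimately show ?thesis unfolding L_def q_def by (intro Suc.IH)
  qed
  have "L \<ge> 0" unfolding L_def using \<open>q \<le> r\<close> \<open>q \<ge> 4\<close> by simp
  have "r / 2 * L \<le> card Good * L"
    using \<open>r / 2 \<le> card Good\<close> \<open>L \<ge> 0\<close> by (rule mult_right_mono)
  also have "\<dots> \<le> (\<Sum>x\<in>Good. real (card (indep_sets E (non_neighbours E Y x - {x}) k)))"
    using IH by (simp add: sum_mono[of Good "\<lambda>_. L", simplified])
  also have "\<dots> \<le> Suc k * card (indep_sets E Y (Suc k))"
    using sum_card_indep_sets_non_neighbours_le[OF G \<open>finite Y\<close>, of Good k]
    unfolding Good_def by (simp flip: of_nat_sum of_nat_mult)
  finally have "r / (2 * real (Suc k)) * L \<le> card (indep_sets E Y (Suc k))"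
    by (simp add: field_simps)
  moreover have "(r / (2 * real (Suc k) * q ^ Suc k)) ^ Suc k \<le> r / (2 * real (Suc k)) * L"
    unfolding L_def using \<open>q \<le> r\<close> \<open>q \<ge> 4\<close> by (intro indep_bound_step) auto
  ultimately show ?case unfolding q_def by linarith
qed

lemma card_indep_sets_double_ge:
  fixes a s :: nat
  assumes "simple_graph V E" and "\<not> contains_Kss V E s" and "s \<ge> 1" and "a \<ge> 1" and "X \<subseteq> V"
    and "(2 * real a) ^ (4 * a + 10) * (4 * real s) ^ (4 * a + 2) \<le> card X"
  shows "(card X / (2 * real (2 * a) * (4 * real s) ^ (2 * a))) ^ (2 * a)
    \<le> card (indep_sets E X (2 * a))"
proof (rule card_indep_sets_ge[OF assms(1-3,5)])
  have "(4 * real s) ^ (2 * a) \<le> (4 * real s) ^ (4 * a + 2)"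
    using assms(3) by (intro power_increasing) auto
  also have "\<dots> = 1 * (4 * real s) ^ (4 * a + 2)" by simp
  also have "\<dots> \<le> (2 * real a) ^ (4 * a + 10) * (4 * real s) ^ (4 * a + 2)"
    using assms(4) by (intro mult_right_mono one_le_power) auto
  finally show "(4 * real s) ^ (2 * a) \<le> card X" using assms(6) by linarith
qed simp

lemma large_independent_shadow:
  fixes \<epsilon> \<delta> :: real
  assumes "finite X" and "\<epsilon> \<ge> 0" and "\<delta> > 0" and "1 \<le> l" and "l \<le> m"
    and not_superspread: "\<And>t H. l \<le> t \<Longrightarrow> t \<le> m \<Longrightarrow> H \<noteq> {} \<Longrightarrow> H \<subseteq> indep_sets E X t
        \<Longrightarrow> \<not> superspread H \<epsilon> \<delta>"
  shows "\<exists>H. H \<subseteq> indep_sets E X (l - 1)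
    \<and> (\<epsilon> * \<delta> / (2 ^ m * real m)) ^ (m - l + 1) * card (indep_sets E X m) \<le> card H"
proof -
  define F where "F = {I. I \<subseteq> X \<and> independent_set E I}"
  have indep_sets_eq: "indep_sets E X t = {T\<in>F. card T = t}" for t
    unfolding indep_sets_def F_def by auto
  have "\<exists>H. H \<subseteq> {T\<in>F. card T = m - (m - l + 1)}
    \<and> (\<epsilon> * \<delta> / (2 ^ m * real m)) ^ (m - l + 1) * card (indep_sets E X m) \<le> card H"
  proof (rule large_iterated_shadow[OF assms(1) _ _ assms(2,3), where l = "l - 1"])
    show "\<forall>T\<in>F. T \<subseteq> X" "\<And>T v. T \<in> F \<Longrightarrow> T - {v} \<in> F"
      unfolding F_def independent_set_def by auto
    fix t H assume "l - 1 < t" "t \<le> m" "H \<noteq> {}" "H \<subseteq> {T\<in>F. card T = t}"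
    then show "\<not> superspread H \<epsilon> \<delta>"
      unfolding indep_sets_eq[symmetric] by (intro not_superspread) auto
  qed (use assms(4,5) indep_sets_eq in auto)
  moreover have "m - (m - l + 1) = l - 1" using assms(4,5) by simp
  ultimately show ?thesis using indep_sets_eq by simp
qed

lemma iterated_bound_gt_pow:
  fixes a s :: nat and n c :: real
  defines "P \<equiv> 2 * real a" and "Q \<equiv> 4 * real s"
  assumes "a \<ge> 1" and "s \<ge> 1" and n: "P ^ (4 * a + 10) * Q ^ (4 * a + 2) \<le> n"
    and c: "c = 1 / (P ^ (2 * a + 5) * (real s * 2 ^ (2 * a)))"
  shows "n ^ (a - 1) < c ^ (a + 1) * (n / (2 * P * Q ^ (2 * a))) ^ (2 * a)"
proof -
  define D where "D = 2 * P * Q ^ (2 * a)"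
  have "P \<ge> 2" "Q \<ge> 4" using assms(3,4) unfolding P_def Q_def by auto
  then have "n > 0" using n by (smt (verit) zero_less_mult_iff zero_less_power)
  have "P ^ 5 * Q ^ (4 * a + 1) \<le> n * c"
  proof -
    have "real s * 2 ^ (2 * a) \<le> Q * P ^ (2 * a)"
      using \<open>P \<ge> 2\<close> unfolding Q_def by (intro mult_mono power_mono) auto
    have "P ^ (4 * a + 10) * Q ^ (4 * a + 2) = P ^ 5 * Q ^ (4 * a + 1) * (P ^ (2 * a + 5) * (Q * P ^ (2 * a)))"
    proof -
      have "4 * a + 10 = 5 + ((2 * a + 5) + 2 * a)" by simp
      then have "P ^ (4 * a + 10) = P ^ 5 * (P ^ (2 * a + 5) * P ^ (2 * a))" by (simp only: power_add)
      then show ?thesis by (simp add: mult_ac)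
    qed
    then have "P ^ 5 * Q ^ (4 * a + 1) \<le> n / (P ^ (2 * a + 5) * (Q * P ^ (2 * a)))"
      using n \<open>P \<ge> 2\<close> \<open>Q \<ge> 4\<close> by (simp add: field_simps)
    also have "\<dots> \<le> n / (P ^ (2 * a + 5) * (real s * 2 ^ (2 * a)))"
      using \<open>n > 0\<close> \<open>P \<ge> 2\<close> \<open>Q \<ge> 4\<close> \<open>s \<ge> 1\<close> \<open>real s * 2 ^ (2 * a) \<le> Q * P ^ (2 * a)\<close>
      by (intro divide_left_mono mult_left_mono) (auto intro!: mult_pos_pos)
    finally show ?thesis unfolding c by simp
  qed
  have "D ^ (2 * a) < (n * c) ^ (a + 1)"
  proof -
    have "D ^ (2 * a) = 2 ^ (2 * a) * P ^ (2 * a) * Q ^ (4 * a * a)"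
      unfolding D_def by (simp add: power_mult_distrib flip: power_mult) (simp add: mult_ac)
    also have "\<dots> \<le> P ^ (2 * a) * P ^ (2 * a) * Q ^ (4 * a * a)"
      using \<open>P \<ge> 2\<close> \<open>Q \<ge> 4\<close> by (intro mult_right_mono power_mono) auto
    also have "\<dots> \<le> P ^ (5 * a + 5) * Q ^ (4 * a * a)"
      using \<open>P \<ge> 2\<close> \<open>Q \<ge> 4\<close> by (intro mult_right_mono) (auto simp flip: power_add intro: power_increasing)
    also have "\<dots> < P ^ (5 * a + 5) * Q ^ ((4 * a + 1) * (a + 1))"
      using \<open>P \<ge> 2\<close> \<open>Q \<ge> 4\<close> by (intro mult_strict_left_mono power_strict_increasing) (auto simp: algebra_simps)
    also have "\<dots> = (P ^ 5 * Q ^ (4 * a + 1)) ^ (a + 1)"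
      by (simp only: power_mult_distrib power_mult[symmetric] distrib_left mult_1_right)
    also have "\<dots> \<le> (n * c) ^ (a + 1)"
      using \<open>P ^ 5 * Q ^ (4 * a + 1) \<le> n * c\<close> \<open>P \<ge> 2\<close> \<open>Q \<ge> 4\<close> by (intro power_mono) auto
    finally show ?thesis .
  qed
  then have "n ^ (a - 1) * 1 < n ^ (a - 1) * ((n * c) ^ (a + 1) / D ^ (2 * a))"
    using \<open>n > 0\<close> \<open>P \<ge> 2\<close> \<open>Q \<ge> 4\<close> unfolding D_def by (intro mult_strict_left_mono) auto
  also have "\<dots> = c ^ (a + 1) * (n / D) ^ (2 * a)"
  proof -
    have "a - 1 + (a + 1) = 2 * a" using \<open>a \<ge> 1\<close> by simp
    then have "n ^ (a - 1) * n ^ (a + 1) = n ^ (2 * a)" by (simp only: power_add[symmetric])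
    then show ?thesis by (simp add: power_divide power_mult_distrib field_simps)
  qed
  finally show ?thesis unfolding D_def by simp
qed

lemma iterated_bound_with_eps_delta_gt_pow:
  fixes a s :: nat and n :: real
  defines "\<epsilon> \<equiv> (2 * real a) powi (-2)" and "\<delta> \<equiv> (2 * real a) powi (- (2 * (int a + 1))) / real s"
  assumes "a \<ge> 1" and "s \<ge> 1" and "(2 * real a) ^ (4 * a + 10) * (4 * real s) ^ (4 * a + 2) \<le> n"
  shows "n ^ (a - 1) < (\<epsilon> * \<delta> / (2 ^ (2 * a) * real (2 * a))) ^ (a + 1)
    * (n / (2 * real (2 * a) * (4 * real s) ^ (2 * a))) ^ (2 * a)"
proof -
  have "- (2 * (int a + 1)) = - int (2 * a + 2)" by simp
  then have "\<delta> = 1 / ((2 * real a) ^ (2 * a + 2) * real s)"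
    unfolding \<delta>_def by (simp only: power_int_minus power_int_of_nat) (simp add: inverse_eq_divide)
  moreover have "\<epsilon> = 1 / (2 * real a) ^ 2"
    unfolding \<epsilon>_def by (simp add: power_int_minus inverse_eq_divide)
  ultimately have "\<epsilon> * \<delta> / (2 ^ (2 * a) * real (2 * a))
      = 1 / ((2 * real a) ^ (2 * a + 5) * (real s * 2 ^ (2 * a)))"
    by (simp add: power_add field_simps eval_nat_numeral)
  then show ?thesis using iterated_bound_gt_pow[OF assms(3-5)] by simp
qed

lemma card_k_subsets_family_le:
  assumes "finite X" and "H \<subseteq> {T. T \<subseteq> X \<and> card T = k}"
  shows "card H \<le> card X ^ k"
proof -
  have "card H \<le> card X choose k"
    using card_mono[OF _ assms(2)] n_subsets[OF assms(1)] assms(1) by simp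
  also have "\<dots> \<le> card X ^ k"
    by (cases "k \<le> card X") (auto simp: binomial_le_pow binomial_eq_0)
  finally show ?thesis .
qed

theorem corollary2p8:
  fixes V :: "'a set" and E :: "'a \<Rightarrow> 'a \<Rightarrow> bool" and X :: "'a set" and s a :: nat
  assumes "s \<ge> 1" and "a \<ge> 1"
    and "simple_graph V E"
    and "\<not> contains_Kss V E s"
    and "X \<subseteq> V"
    and "real (card X) \<ge> (2 * real a) ^ (4 * a + 10) * (4 * real s) ^ (4 * a + 2)"
  shows "\<exists>t::nat. a \<le> t \<and> t \<le> 2 * a \<and>
           (\<exists>\<I> :: 'a set set. \<I> \<noteq> {} \<and>
              (\<forall>I\<in>\<I>. I \<subseteq> X \<and> card I = t \<and> independent_set E I) \<and>
              superspread \<I> ((2 * real a) powi (-2))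
                 ((2 * real a) powi (- (2 * (int a + 1))) / real s))"
proof (rule ccontr)
  define \<epsilon> where "\<epsilon> = (2 * real a) powi (-2)"
  define \<delta> where "\<delta> = (2 * real a) powi (- (2 * (int a + 1))) / real s"
  assume no_witness: "\<not> ?thesis"
  have not_superspread: "\<not> superspread H \<epsilon> \<delta>"
    if "a \<le> t" "t \<le> 2 * a" "H \<noteq> {}" "H \<subseteq> indep_sets E X t" for t H
  proof
    assume "superspread H \<epsilon> \<delta>"
    moreover have "\<forall>I\<in>H. I \<subseteq> X \<and> card I = t \<and> independent_set E I"
      using that(4) unfolding indep_sets_def by blast
    ultimately have "\<exists>t. a \<le> t \<and> t \<le> 2 * a \<and> (\<exists>\<I>. \<I> \<noteq> {} \<and>
        (\<forall>I\<in>\<I>. I \<subseteq> X \<and> card I = t \<and> independent_set E I) \<and> superspread \<I> \<epsilon> \<delta>)"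
      using that(1-3) by (intro exI[of _ t] conjI exI[of _ H])
    with no_witness show False unfolding \<epsilon>_def \<delta>_def by blast
  qed
  define c where "c = \<epsilon> * \<delta> / (2 ^ (2 * a) * real (2 * a))"
  have "finite X" using assms(3,5) finite_subset unfolding simple_graph_def by blast
  moreover have "\<epsilon> \<ge> 0" "\<delta> > 0" using assms(1,2) unfolding \<epsilon>_def \<delta>_def by auto
  ultimately have "\<exists>H. H \<subseteq> indep_sets E X (a - 1)
      \<and> c ^ (2 * a - a + 1) * card (indep_sets E X (2 * a)) \<le> card H"
    unfolding c_def using assms(2) by (intro large_independent_shadow not_superspread) auto
  then obtain H where H: "H \<subseteq> indep_sets E X (a - 1)"
    and card_H: "c ^ (a + 1) * card (indep_sets E X (2 * a)) \<le> card H"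
    by auto
  have "c \<ge> 0" unfolding c_def using \<open>\<epsilon> \<ge> 0\<close> \<open>\<delta> > 0\<close> by simp
  have "real (card X) ^ (a - 1) < c ^ (a + 1) * (card X / (2 * real (2 * a) * (4 * real s) ^ (2 * a))) ^ (2 * a)"
    using iterated_bound_with_eps_delta_gt_pow[OF assms(2,1,6)] unfolding c_def \<epsilon>_def \<delta>_def .
  also have "\<dots> \<le> c ^ (a + 1) * card (indep_sets E X (2 * a))"
    using card_indep_sets_double_ge[OF assms(3,4,1,2,5,6)] \<open>c \<ge> 0\<close> by (intro mult_left_mono) auto
  also have "\<dots> \<le> card H" by (rule card_H)
  also have "\<dots> \<le> card X ^ (a - 1)"
    using H unfolding indep_sets_def by (intro of_nat_mono card_k_subsets_family_le[OF \<open>finite X\<close>]) auto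
  finally show False by simp
qed

end
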